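(* Every $\mathrm{PL}_{\{\neg,\top\}}$-formula $\phi$ is uniquely characterized with respect to $\mathrm{PL}_{\{\neg,\top\}}$ by a set of 2 labeled examples.
   Context: $\top$ is treated as a constant unary Boolean function and $\neg$ is negation. Fix a countably infinite set of propositional variables. $\mathrm{PL}_{\{\neg,\top\}}$ is the set of formulas generated by $\phi::=x\mid\neg\phi\mid\top(\phi)$, with the obvious semantics under truth assignments $V$ (assigning $0$ or $1$ to every variable); two formulas are equivalent if they agree under all assignments. A labeled example is a pair $(V,\mathrm{lab})$ with $V$ a truth assignment and $\mathrm{lab}\in\{0,1\}$; $\phi$ fits it if $\phi$ evaluates to $\mathrm{lab}$ under $V$. A set $E$ of labeled examples uniquely characterizes $\phi$ with respect to a set of formulas $L$ if $\phi$ fits all of $E$ and every formula in $L$ that fits all of $E$ is equivalent to $\phi$. *)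

theory Defs
  imports Main
begin

datatype fml = Var nat | Neg fml | Top fml

type_synonym assignment = "nat \<Rightarrow> bool"

fun eval :: "assignment \<Rightarrow> fml \<Rightarrow> bool" where
  "eval V (Var x) = V x"
| "eval V (Neg \<phi>) = (\<not> eval V \<phi>)"
| "eval V (Top \<phi>) = True"

definition equiv_fml :: "fml \<Rightarrow> fml \<Rightarrow> bool" where
  "equiv_fml \<phi> \<psi> \<longleftrightarrow> (\<forall>V. eval V \<phi> = eval V \<psi>)"

text \<open>A labeled example is a pair (V, lab); labels 0/1 are rendered as False/True.\<close>
type_synonym example = "assignment \<times> bool"

definition fits :: "fml \<Rightarrow> example \<Rightarrow> bool" where
  "fits \<phi> e \<longleftrightarrow> eval (fst e) \<phi> = snd e"

definition uniquely_characterizes :: "example set \<Rightarrow> fml \<Rightarrow> fml set \<Rightarrow> bool" where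
  "uniquely_characterizes E \<phi> L \<longleftrightarrow>
     (\<forall>e\<in>E. fits \<phi> e) \<and>
     (\<forall>\<psi>\<in>L. (\<forall>e\<in>E. fits \<psi> e) \<longrightarrow> equiv_fml \<psi> \<phi>)"

end

theory Submission
  imports Defs
begin

text \<open>\<open>Top\<close> yields constants and \<open>Neg\<close> maps constants to constants and literals to literals,
  so every formula is equivalent to a constant or to a literal \<open>V x = p\<close>. A constant \<open>c\<close> is
  pinned down by labelling both the all-false and the all-true assignment with \<open>c\<close>, since no
  literal takes the same value on them. A literal on \<open>x\<close> is pinned down by the all-false
  assignment and the one making only \<open>x\<close> true: a constant cannot change value between them,
  the first label fixes the polarity and the second one the variable.\<close>

lemma eval_const_or_literal:
  "(\<exists>c. \<forall>V. eval V \<phi> = c) \<or> (\<exists>x p. \<forall>V. eval V \<phi> = (V x = p))"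
proof (induction \<phi>)
  case (Neg \<phi>)
  then show ?case by (metis eval.simps(2))
qed auto

lemma uniquely_characterizes_pair:
  "uniquely_characterizes {(V, a), (W, b)} \<phi> L \<longleftrightarrow>
     eval V \<phi> = a \<and> eval W \<phi> = b \<and>
     (\<forall>\<psi>\<in>L. eval V \<psi> = a \<and> eval W \<psi> = b \<longrightarrow> equiv_fml \<psi> \<phi>)"
  by (auto simp: uniquely_characterizes_def fits_def)

lemma const_uniquely_characterized:
  assumes "\<forall>V. eval V \<phi> = c"
  shows "uniquely_characterizes {(\<lambda>_. False, c), (\<lambda>_. True, c)} \<phi> UNIV"
  unfolding uniquely_characterizes_pair equiv_fml_def
proof (intro conjI ballI impI allI)
  fix \<psi> V
  assume "eval (\<lambda>_. False) \<psi> = c \<and> eval (\<lambda>_. True) \<psi> = c"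
  with eval_const_or_literal[of \<psi>] assms show "eval V \<psi> = eval V \<phi>"
    by auto
qed (use assms in auto)

lemma literal_uniquely_characterized:
  assumes \<phi>_literal: "\<forall>V. eval V \<phi> = (V x = p)"
  shows "uniquely_characterizes {(\<lambda>_. False, \<not> p), (\<lambda>z. z = x, p)} \<phi> UNIV"
  unfolding uniquely_characterizes_pair equiv_fml_def
proof (intro conjI ballI impI allI)
  fix \<psi> V
  assume "eval (\<lambda>_. False) \<psi> = (\<not> p) \<and> eval (\<lambda>z. z = x) \<psi> = p"
  then have fits_false: "eval (\<lambda>_. False) \<psi> = (\<not> p)"
    and fits_x: "eval (\<lambda>z. z = x) \<psi> = p" by simp_all
  have "\<forall>V. eval V \<psi> = (V x = p)"
    using eval_const_or_literal[of \<psi>]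
  proof (elim disjE exE)
    fix c
    assume "\<forall>V. eval V \<psi> = c"
    with fits_false fits_x show ?thesis by auto
  next
    fix y q
    assume \<psi>_literal: "\<forall>V. eval V \<psi> = (V y = q)"
    with fits_false have "q = p" by auto
    with \<psi>_literal fits_x have "y = x" by auto
    with \<psi>_literal \<open>q = p\<close> show ?thesis by simp
  qed
  with \<phi>_literal show "eval V \<psi> = eval V \<phi>" by simp
qed (use \<phi>_literal in auto)

theorem theoremA2:
  fixes \<phi> :: fml
  shows "\<exists>E :: example set. finite E \<and> card E = 2 \<and> uniquely_characterizes E \<phi> UNIV"
  using eval_const_or_literal[of \<phi>]
proof (elim disjE exE)
  fix c
  assume "\<forall>V. eval V \<phi> = c"
  moreover have "(\<lambda>_::nat. False) \<noteq> (\<lambda>_. True)"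
    by (metis (full_types))
  ultimately show ?thesis
    by (intro exI[of _ "{(\<lambda>_. False, c), (\<lambda>_. True, c)}"])
      (simp add: const_uniquely_characterized)
next
  fix x p
  assume "\<forall>V. eval V \<phi> = (V x = p)"
  moreover have "(\<lambda>_::nat. False) \<noteq> (\<lambda>z. z = x)"
    by (metis (full_types))
  ultimately show ?thesis
    by (intro exI[of _ "{(\<lambda>_. False, \<not> p), (\<lambda>z. z = x, p)}"])
      (simp add: literal_uniquely_characterized)
qed

end
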